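(* If a Banach space $Y$ contains a strictly convex $2$-dimensional subspace, then there exists a uniformly convex Banach space $X$ such that the pair $(X,Y)$ fails the uniform sBPBp.
   Context: Scalars $\mathbb{K}=\mathbb{R}$ or $\mathbb{C}$; $S_X$ is the unit sphere of $X$, $\mathcal{L}(X,Y)$ the bounded linear operators. A pair of Banach spaces $(X,Y)$ has the uniform strong Bishop–Phelps–Bollobás property (uniform sBPBp) if for every $\varepsilon>0$ there exists $\eta(\varepsilon)>0$ such that whenever $T\in\mathcal{L}(X,Y)$ with $\|T\|=1$ and $x_0\in S_X$ satisfy $\|T(x_0)\|>1-\eta(\varepsilon)$, there exists $x_1\in S_X$ with $\|T(x_1)\|=1$ and $\|x_1-x_0\|<\varepsilon$. *)

theory Defs
  imports "HOL-Analysis.Analysis" "HOL-Library.Function_Algebras"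
begin

text \<open>Scalars: a type 'k of class real_normed_field (by Mazur's theorem exactly
  the real or the complex numbers, up to isomorphism).\<close>

definition K_normed_space ::
  "'x::ab_group_add set \<Rightarrow> ('k::real_normed_field \<Rightarrow> 'x \<Rightarrow> 'x) \<Rightarrow> ('x \<Rightarrow> real) \<Rightarrow> bool" where
  "K_normed_space V sc N \<longleftrightarrow>
     0 \<in> V \<and> (\<forall>x\<in>V. \<forall>y\<in>V. x + y \<in> V) \<and> (\<forall>c. \<forall>x\<in>V. sc c x \<in> V) \<and>
     (\<forall>a b. \<forall>x\<in>V. sc (a + b) x = sc a x + sc b x) \<and>
     (\<forall>a. \<forall>x\<in>V. \<forall>y\<in>V. sc a (x + y) = sc a x + sc a y) \<and>
     (\<forall>a b. \<forall>x\<in>V. sc (a * b) x = sc a (sc b x)) \<and>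
     (\<forall>x\<in>V. sc 1 x = x) \<and>
     (\<forall>x\<in>V. N x = 0 \<longleftrightarrow> x = 0) \<and>
     (\<forall>c. \<forall>x\<in>V. N (sc c x) = norm c * N x) \<and>
     (\<forall>x\<in>V. \<forall>y\<in>V. N (x + y) \<le> N x + N y)"

definition K_banach_space ::
  "'x::ab_group_add set \<Rightarrow> ('k::real_normed_field \<Rightarrow> 'x \<Rightarrow> 'x) \<Rightarrow> ('x \<Rightarrow> real) \<Rightarrow> bool" where
  "K_banach_space V sc N \<longleftrightarrow> K_normed_space V sc N \<and>
     (\<forall>f :: nat \<Rightarrow> 'x. (\<forall>n. f n \<in> V) \<and>
        (\<forall>e>0. \<exists>M. \<forall>m\<ge>M. \<forall>n\<ge>M. N (f m - f n) < e) \<longrightarrow>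
        (\<exists>x\<in>V. \<forall>e>0. \<exists>M. \<forall>n\<ge>M. N (f n - x) < e))"

text \<open>A K-vector space structure on a real Banach space type, compatible with
  the real scalar multiplication and the norm (e.g. a complex Banach space).\<close>

definition K_scalar_action :: "('k::real_normed_field \<Rightarrow> 'b::real_normed_vector \<Rightarrow> 'b) \<Rightarrow> bool" where
  "K_scalar_action sc \<longleftrightarrow>
     (\<forall>r y. sc (of_real r) y = r *\<^sub>R y) \<and>
     (\<forall>a b y. sc (a + b) y = sc a y + sc b y) \<and>
     (\<forall>a y z. sc a (y + z) = sc a y + sc a z) \<and>
     (\<forall>a b y. sc (a * b) y = sc a (sc b y)) \<and>
     (\<forall>a y. norm (sc a y) = norm a * norm y)"

definition uniformly_convex :: "'x::ab_group_add set \<Rightarrow> ('x \<Rightarrow> real) \<Rightarrow> bool" where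
  "uniformly_convex V N \<longleftrightarrow>
     (\<forall>\<epsilon>>0. \<exists>\<delta>>0. \<forall>x\<in>V. \<forall>y\<in>V. N x = 1 \<and> N y = 1 \<and> N (x - y) \<ge> \<epsilon> \<longrightarrow>
        N (x + y) / 2 \<le> 1 - \<delta>)"

definition strictly_convex_set :: "'b::real_normed_vector set \<Rightarrow> bool" where
  "strictly_convex_set W \<longleftrightarrow>
     (\<forall>x\<in>W. \<forall>y\<in>W. norm x = 1 \<and> norm y = 1 \<and> x \<noteq> y \<longrightarrow> norm (x + y) / 2 < 1)"

definition K_span2 :: "('k::real_normed_field \<Rightarrow> 'b \<Rightarrow> 'b) \<Rightarrow> 'b::ab_group_add \<Rightarrow> 'b \<Rightarrow> 'b set" where
  "K_span2 sc u v = {sc a u + sc b v | a b. True}"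

definition K_indep2 :: "('k::real_normed_field \<Rightarrow> 'b \<Rightarrow> 'b) \<Rightarrow> 'b::ab_group_add \<Rightarrow> 'b \<Rightarrow> bool" where
  "K_indep2 sc u v \<longleftrightarrow> (\<forall>a b. sc a u + sc b v = 0 \<longrightarrow> a = 0 \<and> b = 0)"

definition K_linear_on ::
  "'x::ab_group_add set \<Rightarrow> ('k::real_normed_field \<Rightarrow> 'x \<Rightarrow> 'x) \<Rightarrow> ('k \<Rightarrow> 'b \<Rightarrow> 'b)
     \<Rightarrow> ('x \<Rightarrow> 'b::ab_group_add) \<Rightarrow> bool" where
  "K_linear_on V scX scY T \<longleftrightarrow>
     (\<forall>x\<in>V. \<forall>y\<in>V. T (x + y) = T x + T y) \<and> (\<forall>c. \<forall>x\<in>V. T (scX c x) = scY c (T x))"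

definition bounded_on :: "'x set \<Rightarrow> ('x \<Rightarrow> real) \<Rightarrow> ('x \<Rightarrow> 'b::real_normed_vector) \<Rightarrow> bool" where
  "bounded_on V N T \<longleftrightarrow> (\<exists>C. \<forall>x\<in>V. norm (T x) \<le> C * N x)"

definition op_norm_on :: "'x set \<Rightarrow> ('x \<Rightarrow> real) \<Rightarrow> ('x \<Rightarrow> 'b::real_normed_vector) \<Rightarrow> real" where
  "op_norm_on V N T = Sup ((\<lambda>x. norm (T x)) ` {x \<in> V. N x \<le> 1})"

definition uniform_sBPBp ::
  "'x::ab_group_add set \<Rightarrow> ('k::real_normed_field \<Rightarrow> 'x \<Rightarrow> 'x) \<Rightarrow> ('x \<Rightarrow> real)
     \<Rightarrow> ('k \<Rightarrow> 'b::real_normed_vector \<Rightarrow> 'b) \<Rightarrow> bool" where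
  "uniform_sBPBp V scX N scY \<longleftrightarrow>
     (\<forall>\<epsilon>>0. \<exists>\<eta>>0. \<forall>T :: 'x \<Rightarrow> 'b.
        K_linear_on V scX scY T \<and> bounded_on V N T \<and> op_norm_on V N T = 1 \<longrightarrow>
        (\<forall>x0\<in>V. N x0 = 1 \<and> norm (T x0) > 1 - \<eta> \<longrightarrow>
           (\<exists>x1\<in>V. N x1 = 1 \<and> norm (T x1) = 1 \<and> N (x1 - x0) < \<epsilon>)))"

end

theory Submission
  imports Defs
begin

text \<open>
  A Gelfand--Mazur type argument shows that every element of the real normed field of scalars
  is a root of a real quadratic, so the scalars are the reals or the complex numbers up to a
  bounded real basis, and closed balls of scalars are compact.

  Let \<open>J (a, b) = a u + b v\<close>. Then \<open>X = K\<^sup>2\<close> with the norm \<open>\<parallel>J x\<parallel>\<close> is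
  isometric to the span of \<open>u, v\<close>; being finite-dimensional and strictly convex, it is
  uniformly convex by compactness of its sphere. Pick \<open>c\<^sub>0\<close> minimising
  \<open>\<parallel>J (c, 1)\<parallel>\<close>; then \<open>P (a, b) = (b c\<^sub>0, b)\<close> is a norm-one projection. The operators
  \<open>T\<^sub>t = (1 - t) J + t J P\<close> have norm one and \<open>\<parallel>T\<^sub>t (u/\<parallel>u\<parallel>, 0)\<parallel> = 1 - t\<close>, but by strict
  convexity \<open>T\<^sub>t\<close> attains its norm only at fixed points of \<open>P\<close>, and these all lie at
  distance at least one from \<open>(u/\<parallel>u\<parallel>, 0)\<close>. Letting \<open>t \<rightarrow> 0\<close> contradicts the uniform sBPBp.
\<close>

text \<open>\<open>conj_quad \<xi> z\<close> is \<open>(\<xi> - z) (\<xi> - cnj z)\<close>, the real quadratic with roots \<open>z, cnj z\<close>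
  evaluated at \<open>\<xi>\<close>.\<close>

definition conj_quad :: "'k::real_normed_field \<Rightarrow> complex \<Rightarrow> 'k" where
  "conj_quad \<xi> z = (\<xi> - of_real (Re z))^2 + of_real ((Im z)^2)"

lemma conj_quad_square:
  fixes y :: "'k::real_normed_field"
  assumes "w^2 = c"
  shows "conj_quad (y^2) c = conj_quad y w * conj_quad y (-w)"
proof -
  have "Re c = (Re w)^2 - (Im w)^2" "Im c = 2 * Re w * Im w"
    using assms by (auto simp: Re_power2 Im_power2)
  then have re: "(of_real (Re c) :: 'k) = (of_real (Re w))^2 - (of_real (Im w))^2"
    and im: "(of_real ((Im c)^2) :: 'k) = (2 * of_real (Re w) * of_real (Im w))^2"
    by simp_all
  show ?thesis
    unfolding conj_quad_def re im by (simp add: power2_eq_square algebra_simps)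
qed

lemma conj_quad_translate:
  fixes y :: "'k::real_normed_field"
  shows "conj_quad (y + of_real s) c = conj_quad y (c - of_real s)"
  unfolding conj_quad_def by (simp add: algebra_simps)

lemma conj_quad_compose:
  fixes \<xi> :: "'k::real_normed_field"
  shows "\<exists>w w'. conj_quad (conj_quad \<xi> z) c = conj_quad \<xi> w * conj_quad \<xi> w'"
proof -
  define w where "w = csqrt (c - of_real ((Im z)^2))"
  have "conj_quad (conj_quad \<xi> z) c = conj_quad ((\<xi> - of_real (Re z))^2) (c - of_real ((Im z)^2))"
    unfolding conj_quad_def [of \<xi> z] conj_quad_translate ..
  also have "\<dots> = conj_quad (\<xi> + of_real (- Re z)) w * conj_quad (\<xi> + of_real (- Re z)) (-w)"
    by (simp add: conj_quad_square w_def)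
  finally show ?thesis unfolding conj_quad_translate by blast
qed

lemma conj_quad_compose_lower:
  fixes \<xi> :: "'k::real_normed_field"
  assumes "\<And>z. m \<le> norm (conj_quad \<xi> z)" "0 \<le> m"
  shows "m^2 \<le> norm (conj_quad (conj_quad \<xi> z) c)"
proof -
  obtain w w' where "conj_quad (conj_quad \<xi> z) c = conj_quad \<xi> w * conj_quad \<xi> w'"
    using conj_quad_compose by blast
  moreover have "m * m \<le> norm (conj_quad \<xi> w) * norm (conj_quad \<xi> w')"
    using assms by (intro mult_mono) auto
  ultimately show ?thesis by (simp add: norm_mult power2_eq_square)
qed

lemma conj_quad_power_lower:
  fixes g :: "'k::real_normed_field"
  assumes "\<And>c. M \<le> norm (conj_quad g c)" "0 \<le> M"
  shows "M ^ (2 ^ l) \<le> norm (conj_quad (g ^ (2 ^ l)) c)"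
proof (induction l arbitrary: c)
  case 0
  then show ?case using assms(1) by simp
next
  case (Suc l)
  have "M ^ (2 ^ Suc l) = M ^ (2 ^ l) * M ^ (2 ^ l)"
    by (simp add: mult_2 flip: power_add)
  also have "\<dots> \<le> norm (conj_quad (g ^ (2 ^ l)) (csqrt c)) * norm (conj_quad (g ^ (2 ^ l)) (- csqrt c))"
    using Suc.IH assms(2) by (intro mult_mono) auto
  also have "\<dots> = norm (conj_quad ((g ^ (2 ^ l))^2) c)"
    by (simp add: conj_quad_square[of "csqrt c" c] norm_mult)
  finally show ?case by (simp add: power_even_eq)
qed

lemma conj_quad_power_root_lower:
  fixes g :: "'k::real_normed_field"
  assumes "\<And>c. M \<le> norm (conj_quad g c)" "0 \<le> M"
  shows "w ^ (2 ^ l) = c \<Longrightarrow> norm (conj_quad g w) * M ^ (2 ^ l - 1) \<le> norm (conj_quad (g ^ (2 ^ l)) c)"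
proof (induction l arbitrary: c)
  case 0
  then show ?case by simp
next
  case (Suc l)
  define w' where "w' = w ^ (2 ^ l)"
  have "2 ^ l - 1 + 2 ^ l = (2::nat) ^ Suc l - 1" by simp
  then have "norm (conj_quad g w) * M ^ (2 ^ Suc l - 1) = (norm (conj_quad g w) * M ^ (2 ^ l - 1)) * M ^ (2 ^ l)"
    by (metis power_add mult.assoc)
  also have "\<dots> \<le> norm (conj_quad (g ^ (2 ^ l)) w') * norm (conj_quad (g ^ (2 ^ l)) (- w'))"
    using Suc.IH[OF w'_def[symmetric]] conj_quad_power_lower[OF assms] assms(2) by (intro mult_mono) auto
  also have "\<dots> = norm (conj_quad ((g ^ (2 ^ l))^2) c)"
  proof -
    have "w'^2 = c" using Suc.prems by (simp add: w'_def power_even_eq)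
    then show ?thesis by (simp add: conj_quad_square norm_mult)
  qed
  finally show ?case by (simp add: power_even_eq)
qed

text \<open>If \<open>m = min \<bar>conj_quad \<xi>\<bar>\<close> is attained at \<open>z\<close> then, with \<open>g = conj_quad \<xi> z\<close> and
  \<open>N = 2\<^bsup>k+1\<^esup>\<close>, factorising \<open>conj_quad (g\<^sup>N) (e\<^sup>N)\<close> gives
  \<open>\<bar>g + e\<bar>\<^sup>2 m\<^bsup>2N-2\<^esup> \<le> (m\<^sup>N + e\<^sup>N)\<^sup>2\<close>; as \<open>k \<rightarrow> \<infinity>\<close> the minimum is attained also at the
  point where \<open>conj_quad \<xi>\<close> takes the value \<open>g + e\<close>.\<close>

lemma conj_quad_min_lift:
  fixes \<xi> :: "'k::real_normed_field"
  assumes min: "\<And>z. m \<le> norm (conj_quad \<xi> z)" and m: "0 < m"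
    and z: "norm (conj_quad \<xi> z) = m" and e: "0 < e" "e < m"
  shows "norm (conj_quad \<xi> (Complex (Re z) (sqrt ((Im z)^2 + e)))) = m"
proof -
  define g where "g = conj_quad \<xi> z"
  have lift: "conj_quad \<xi> (Complex (Re z) (sqrt ((Im z)^2 + e))) = g + of_real e"
    unfolding g_def conj_quad_def using e by simp
  have bound: "norm (g + of_real e) \<le> m + m * (e/m) ^ (2 ^ Suc k)" for k
  proof -
    define N :: nat where "N = 2 ^ Suc k"
    have "1 \<le> N" unfolding N_def by simp
    have "(complex_of_real (- e)) ^ (2 ^ Suc k) = complex_of_real (e ^ N)"
      unfolding N_def by (simp add: power_mult)
    from conj_quad_power_root_lower[OF conj_quad_compose_lower[OF min] _ this] m
    have "norm (conj_quad g (of_real (- e))) * (m^2) ^ (N - 1) \<le> norm (conj_quad (g ^ N) (of_real (e ^ N)))"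
      unfolding g_def N_def by simp
    also have "\<dots> = norm (g ^ N - of_real (e ^ N))^2"
      unfolding conj_quad_def by (simp add: norm_power)
    finally have "(norm (g + of_real e) * m ^ (N - 1))^2 \<le> norm (g ^ N - of_real (e ^ N))^2"
      unfolding conj_quad_def by (simp add: norm_power power_mult_distrib mult.commute flip: power_mult)
    then have "norm (g + of_real e) * m ^ (N - 1) \<le> norm (g ^ N - of_real (e ^ N))"
      by (rule power2_le_imp_le) simp
    also have "\<dots> \<le> m ^ N + e ^ N"
      using norm_triangle_ineq4[of "g ^ N" "of_real (e ^ N)"] e by (simp add: norm_power g_def z)
    also have "\<dots> = (m + m * (e/m) ^ N) * m ^ (N - 1)"
    proof -
      have "m * m ^ (N - 1) = m ^ N" using \<open>1 \<le> N\<close> by (metis power_minus_mult mult.commute not_one_le_zero neq0_conv)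
      moreover have "(e/m) ^ N * m ^ N = e ^ N" using m by (simp add: power_divide)
      ultimately show ?thesis by (simp add: distrib_right mult.assoc mult.left_commute[of m])
    qed
    finally show ?thesis unfolding N_def using m by simp
  qed
  have "(\<lambda>k. (e/m) ^ (2 ^ Suc k)) \<longlonglongrightarrow> 0"
  proof (rule LIMSEQ_subseq_LIMSEQ[unfolded comp_def])
    show "(\<lambda>n. (e/m) ^ n) \<longlonglongrightarrow> 0" using e m by (intro LIMSEQ_power_zero) simp
    show "strict_mono (\<lambda>k::nat. (2::nat) ^ Suc k)" by (rule strict_monoI_Suc) simp
  qed
  then have "(\<lambda>k. m + m * (e/m) ^ (2 ^ Suc k)) \<longlonglongrightarrow> m + m * 0"
    by (intro tendsto_intros)
  then have "norm (g + of_real e) \<le> m"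
    using bound by (intro LIMSEQ_le_const) auto
  moreover have "m \<le> norm (g + of_real e)" using min unfolding lift[symmetric] .
  ultimately show ?thesis unfolding lift by simp
qed

lemma conj_quad_norm_lower:
  fixes \<xi> :: "'k::real_normed_field"
  shows "(cmod z)^2 - 2 * cmod z * norm \<xi> - (norm \<xi>)^2 \<le> norm (conj_quad \<xi> z)"
proof -
  have eq: "conj_quad \<xi> z = of_real ((cmod z)^2) - (2 * of_real (Re z) * \<xi> - \<xi>^2)"
    unfolding conj_quad_def cmod_power2 by (simp add: algebra_simps power2_eq_square)
  have "norm (2 * of_real (Re z) * \<xi> - \<xi>^2) \<le> 2 * \<bar>Re z\<bar> * norm \<xi> + (norm \<xi>)^2"
    by (rule order_trans[OF norm_triangle_ineq4]) (simp add: norm_mult norm_power)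
  also have "\<dots> \<le> 2 * cmod z * norm \<xi> + (norm \<xi>)^2"
    by (simp add: abs_Re_le_cmod mult_right_mono)
  finally have "norm (2 * of_real (Re z) * \<xi> - \<xi>^2) \<le> 2 * cmod z * norm \<xi> + (norm \<xi>)^2" .
  moreover have "norm (of_real ((cmod z)^2) :: 'k) - norm (2 * of_real (Re z) * \<xi> - \<xi>^2) \<le> norm (conj_quad \<xi> z)"
    unfolding eq by (rule norm_triangle_ineq2)
  moreover have "norm (of_real ((cmod z)^2) :: 'k) = (cmod z)^2"
    by (simp only: norm_of_real) simp
  ultimately show ?thesis by linarith
qed

lemma conj_quad_far:
  fixes \<xi> :: "'k::real_normed_field"
  assumes "3 * norm \<xi> < cmod z"
  shows "norm (conj_quad \<xi> 0) < norm (conj_quad \<xi> z)"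
proof -
  have "cmod z * (3 * norm \<xi>) < cmod z * cmod z"
    using assms by (intro mult_strict_left_mono) auto
  moreover have "(3 * norm \<xi>) * norm \<xi> \<le> cmod z * norm \<xi>"
    using assms by (intro mult_right_mono) auto
  moreover have "norm (conj_quad \<xi> 0) = norm \<xi> * norm \<xi>"
    unfolding conj_quad_def by (simp add: norm_mult power2_eq_square)
  moreover have "cmod z * cmod z - 2 * (cmod z * norm \<xi>) - norm \<xi> * norm \<xi> \<le> norm (conj_quad \<xi> z)"
    using conj_quad_norm_lower[of z \<xi>] by (simp add: power2_eq_square algebra_simps)
  moreover have "0 \<le> norm \<xi> * norm \<xi>" by simp
  ultimately show ?thesis by linarith
qed

lemma conj_quad_attains_min:
  fixes \<xi> :: "'k::real_normed_field"
  shows "\<exists>z0. \<forall>z. norm (conj_quad \<xi> z0) \<le> norm (conj_quad \<xi> z)"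
proof -
  have "continuous_on (cball 0 (3 * norm \<xi>)) (\<lambda>z. norm (conj_quad \<xi> z))"
    unfolding conj_quad_def by (intro continuous_intros)
  moreover have "cball 0 (3 * norm \<xi>) \<noteq> {}" by simp
  ultimately obtain z0
    where z0: "\<And>z. z \<in> cball 0 (3 * norm \<xi>) \<Longrightarrow> norm (conj_quad \<xi> z0) \<le> norm (conj_quad \<xi> z)"
    using continuous_attains_inf[OF compact_cball] by blast
  have "norm (conj_quad \<xi> z0) \<le> norm (conj_quad \<xi> z)" for z
    using z0[of z] z0[of 0] conj_quad_far[of \<xi> z] by (cases "z \<in> cball 0 (3 * norm \<xi>)") auto
  then show ?thesis by blast
qed

text \<open>Iterating the lift moves a minimiser arbitrarily far out, contradicting coercivity.\<close>

lemma conj_quad_has_root: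
  fixes \<xi> :: "'k::real_normed_field"
  shows "\<exists>z. conj_quad \<xi> z = 0"
proof (rule ccontr)
  assume no_root: "\<nexists>z. conj_quad \<xi> z = 0"
  obtain z0 where min: "\<And>z. norm (conj_quad \<xi> z0) \<le> norm (conj_quad \<xi> z)"
    using conj_quad_attains_min by blast
  define m where "m = norm (conj_quad \<xi> z0)"
  have m: "0 < m" using no_root unfolding m_def by simp
  define e where "e = m / 2"
  have e: "0 < e" "e < m" using m unfolding e_def by auto
  define zk where "zk k = Complex (Re z0) (sqrt ((Im z0)^2 + real k * e))" for k :: nat
  have zk: "norm (conj_quad \<xi> (zk k)) = m" for k
  proof (induction k)
    case 0
    then show ?case by (simp add: zk_def m_def conj_quad_def)
  next
    case (Suc k)
    have "Complex (Re (zk k)) (sqrt ((Im (zk k))^2 + e)) = zk (Suc k)"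
      using e by (simp add: zk_def algebra_simps)
    with conj_quad_min_lift[OF min[folded m_def] m Suc.IH e] show ?case by simp
  qed
  obtain k :: nat where k: "(3 * norm \<xi>)^2 / e < real k" using reals_Archimedean2 by blast
  have "(3 * norm \<xi>)^2 < real k * e" using k e by (simp add: field_simps)
  also have "\<dots> \<le> (Im (zk k))^2" using e by (simp add: zk_def)
  also have "\<dots> \<le> (cmod (zk k))^2" by (simp add: cmod_power2)
  finally have "3 * norm \<xi> < cmod (zk k)" by (rule power2_less_imp_less) simp
  then have "norm (conj_quad \<xi> 0) < m" using conj_quad_far zk by metis
  then show False using min[of 0] m_def by simp
qed

lemma real_imag_coords_bound:
  fixes i :: "'k::real_normed_field"
  assumes i: "i^2 = -1"
  shows "max \<bar>a\<bar> \<bar>b\<bar> \<le> 2 * norm (of_real a + of_real b * i)"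
proof -
  define x where "x = (of_real a + of_real b * i :: 'k)"
  have "norm i ^ 2 = 1" using i by (metis norm_minus_cancel norm_one norm_power)
  then have ni: "norm i = 1" using norm_ge_zero[of i] by (auto simp: power2_eq_1_iff)
  have "x * (of_real a - of_real b * i) = (of_real a)^2 - (of_real b)^2 * i^2"
    unfolding x_def by (simp add: algebra_simps power2_eq_square)
  then have "x * (of_real a - of_real b * i) = of_real (a^2 + b^2)"
    using i by simp
  then have p: "norm x * norm (of_real a - of_real b * i :: 'k) = a^2 + b^2"
    by (metis norm_mult norm_of_real abs_of_nonneg sum_power2_ge_zero)
  define M where "M = max \<bar>a\<bar> \<bar>b\<bar>"
  have "M * M \<le> a^2 + b^2"
    unfolding M_def by (simp add: max_def power2_eq_square)
  also have "\<dots> \<le> norm x * (\<bar>a\<bar> + \<bar>b\<bar>)" unfolding p[symmetric]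
    by (intro mult_left_mono order_trans[OF norm_triangle_ineq4]) (simp_all add: norm_mult ni)
  also have "\<dots> \<le> norm x * (2 * M)"
    by (intro mult_left_mono) (simp_all add: M_def)
  finally have "M * M \<le> (2 * norm x) * M" by (simp add: algebra_simps)
  moreover have "0 \<le> M" by (simp add: M_def)
  ultimately have "M \<le> 2 * norm x"
    by (cases "M = 0") (simp_all add: mult_le_cancel_right)
  then show ?thesis unfolding M_def x_def .
qed

lemma real_normed_field_real_imag:
  "\<exists>i::'k::real_normed_field. \<forall>\<xi>. \<exists>a b. \<xi> = of_real a + of_real b * i \<and> max \<bar>a\<bar> \<bar>b\<bar> \<le> 2 * norm \<xi>"
proof -
  define i :: 'k where "i = (SOME j. j^2 = -1)"
  have "\<exists>a b. \<xi> = of_real a + of_real b * i \<and> max \<bar>a\<bar> \<bar>b\<bar> \<le> 2 * norm \<xi>" for \<xi> :: 'k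
  proof -
    obtain z where "conj_quad \<xi> z = 0" using conj_quad_has_root by blast
    then have sq: "(\<xi> - of_real (Re z))^2 = - of_real ((Im z)^2)"
      unfolding conj_quad_def by (simp add: eq_neg_iff_add_eq_0)
    show ?thesis
    proof (cases "Im z = 0")
      case True
      then have "\<xi> = of_real (Re z)" using sq by simp
      then show ?thesis by (intro exI[of _ "Re z"] exI[of _ 0]) simp
    next
      case False
      define j where "j = (\<xi> - of_real (Re z)) / of_real (Im z)"
      have "j^2 = -1" unfolding j_def using sq False by (simp add: power_divide)
      then have "i^2 = -1" unfolding i_def by (rule someI)
      have \<xi>: "\<xi> = of_real (Re z) + of_real (Im z) * j"
        unfolding j_def using False by simp
      from \<open>j^2 = -1\<close> \<open>i^2 = -1\<close> have "j = i \<or> j = -i" using power2_eq_iff[of j i] by simp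
      then obtain b where "\<xi> = of_real (Re z) + of_real b * i"
      proof
        assume "j = i"
        then show thesis using that \<xi> by blast
      next
        assume "j = -i"
        then show thesis using that[of "- Im z"] \<xi> by simp
      qed
      with real_imag_coords_bound[OF \<open>i^2 = -1\<close>] show ?thesis by blast
    qed
  qed
  then show ?thesis by blast
qed

lemma compact_cball_real_normed_field: "compact (cball (0::'k::real_normed_field) r)"
proof -
  obtain i :: 'k where i: "\<And>\<xi>. \<exists>a b. \<xi> = of_real a + of_real b * i \<and> max \<bar>a\<bar> \<bar>b\<bar> \<le> 2 * norm \<xi>"
    using real_normed_field_real_imag by blast
  define E :: "real \<times> real \<Rightarrow> 'k" where "E p = of_real (fst p) + of_real (snd p) * i" for p
  have "cball 0 r \<subseteq> E ` cball 0 (4 * r)"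
  proof
    fix \<xi> :: 'k assume "\<xi> \<in> cball 0 r"
    obtain a b where ab: "\<xi> = of_real a + of_real b * i" "max \<bar>a\<bar> \<bar>b\<bar> \<le> 2 * norm \<xi>"
      using i by blast
    have "norm (a, b) \<le> \<bar>a\<bar> + \<bar>b\<bar>" using norm_Pair_le[of a b] by simp
    also have "\<dots> \<le> 4 * r" using ab(2) \<open>\<xi> \<in> cball 0 r\<close> by auto
    finally show "\<xi> \<in> E ` cball 0 (4 * r)" using ab(1) by (auto simp: E_def image_iff intro!: bexI[of _ "(a, b)"])
  qed
  moreover have "compact (E ` cball 0 (4 * r))"
    unfolding E_def by (intro compact_continuous_image continuous_intros compact_cball)
  ultimately have "cball 0 r = E ` cball 0 (4 * r) \<inter> cball 0 r" by blast
  then show ?thesis by (metis compact_Int_closed closed_cball \<open>compact (E ` cball 0 (4 * r))\<close>)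
qed

lemma strictly_convex_set_norm_comb_eq:
  fixes p q :: "'b::real_normed_vector"
  assumes W: "strictly_convex_set W" "p \<in> W" "q \<in> W"
    and norms: "norm p = 1" "norm q \<le> 1" and t: "0 < t" "t \<le> 1/2"
    and comb: "norm ((1 - t) *\<^sub>R p + t *\<^sub>R q) = 1"
  shows "p = q"
proof (rule ccontr)
  assume "p \<noteq> q"
  have "1 \<le> (1 - t) * norm p + t * norm q"
    using comb norm_triangle_ineq[of "(1 - t) *\<^sub>R p" "t *\<^sub>R q"] t by simp
  then have "norm q = 1" using norms t by (simp add: mult_le_cancel_left1)
  then have mid: "norm (p + q) / 2 < 1"
    using W \<open>p \<noteq> q\<close> norms unfolding strictly_convex_set_def by blast
  have "(1 - t) *\<^sub>R p + t *\<^sub>R q = (1 - 2 * t) *\<^sub>R p + (2 * t) *\<^sub>R ((1/2) *\<^sub>R (p + q))"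
    by (simp add: algebra_simps flip: scaleR_add_left)
  then have "1 \<le> (1 - 2 * t) * norm p + (2 * t) * (norm (p + q) / 2)"
    using comb t norm_triangle_ineq[of "(1 - 2 * t) *\<^sub>R p" "(2 * t) *\<^sub>R ((1/2) *\<^sub>R (p + q))"]
    by simp
  moreover have "(2 * t) * (norm (p + q) / 2) < 2 * t"
    using mid t by simp
  ultimately show False using norms t by simp
qed

lemma compact_sphere_imp_uniformly_convex:
  fixes W :: "'b::real_normed_vector set"
  assumes W: "strictly_convex_set W" and compact: "compact {y \<in> W. norm y = 1}"
  shows "uniformly_convex W norm"
  unfolding uniformly_convex_def
proof (intro allI impI)
  fix \<epsilon> :: real assume "0 < \<epsilon>"
  define S where "S = {y \<in> W. norm y = 1} \<times> {y \<in> W. norm y = 1} \<inter> {p. \<epsilon> \<le> norm (fst p - snd p)}"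
  have "compact S"
    unfolding S_def using compact
    by (intro compact_Int_closed compact_Times closed_Collect_le continuous_intros) auto
  show "\<exists>\<delta>>0. \<forall>x\<in>W. \<forall>y\<in>W. norm x = 1 \<and> norm y = 1 \<and> \<epsilon> \<le> norm (x - y) \<longrightarrow> norm (x + y) / 2 \<le> 1 - \<delta>"
  proof (cases "S = {}")
    case True
    then show ?thesis unfolding S_def by (intro exI[of _ 1]) auto
  next
    case False
    have "continuous_on S (\<lambda>p. 1 - norm (fst p + snd p) / 2)"
      by (intro continuous_intros) simp
    then obtain p0 where "p0 \<in> S" and p0: "\<And>p. p \<in> S \<Longrightarrow> 1 - norm (fst p0 + snd p0) / 2 \<le> 1 - norm (fst p + snd p) / 2"
      using continuous_attains_inf[OF \<open>compact S\<close> False] by blast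
    have "fst p0 \<noteq> snd p0" using \<open>p0 \<in> S\<close> \<open>0 < \<epsilon>\<close> unfolding S_def by auto
    then have "norm (fst p0 + snd p0) / 2 < 1"
      using W \<open>p0 \<in> S\<close> unfolding S_def strictly_convex_set_def by auto
    with p0 show ?thesis unfolding S_def
      by (intro exI[of _ "1 - norm (fst p0 + snd p0) / 2"]) force
  qed
qed

definition two_coord_space :: "(nat \<Rightarrow> 'a::zero) set" where
  "two_coord_space = {x. \<forall>i\<ge>2. x i = 0}"

lemma two_coord_space_eqI:
  assumes "x \<in> two_coord_space" "y \<in> two_coord_space" "x 0 = y 0" "x 1 = y 1"
  shows "x = y"
proof
  fix i show "x i = y i"
    using assms unfolding two_coord_space_def by (cases "i < 2") (auto simp: less_2_cases_iff)
qed

locale strictly_convex_plane =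
  fixes scY :: "'k::{real_normed_field,banach} \<Rightarrow> 'b::banach \<Rightarrow> 'b"
    and u v :: 'b
  assumes scalar_action: "K_scalar_action scY"
    and indep: "K_indep2 scY u v"
    and strictly_convex: "strictly_convex_set (K_span2 scY u v)"
begin

lemma scY_of_real: "scY (of_real r) y = r *\<^sub>R y"
  and scY_add_left: "scY (a + b) y = scY a y + scY b y"
  and scY_add_right: "scY a (y + z) = scY a y + scY a z"
  and scY_mult: "scY (a * b) y = scY a (scY b y)"
  and norm_scY: "norm (scY a y) = norm a * norm y"
  using scalar_action unfolding K_scalar_action_def by blast+

lemma scY_one [simp]: "scY 1 y = y"
  and scY_zero_left [simp]: "scY 0 y = 0"
  using scY_of_real[of 1 y] scY_of_real[of 0 y] by simp_all

lemma bounded_linear_scY_left: "bounded_linear (\<lambda>a. scY a y)"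
proof (rule bounded_linear_intro)
  show "scY (a + b) y = scY a y + scY b y" for a b by (rule scY_add_left)
  show "scY (r *\<^sub>R a) y = r *\<^sub>R scY a y" for r a
    by (simp add: scaleR_conv_of_real scY_mult scY_of_real)
  show "norm (scY a y) \<le> norm a * norm y" for a by (simp add: norm_scY)
qed

lemma scY_scaleR: "scY a (r *\<^sub>R y) = r *\<^sub>R scY a y"
  by (metis scY_mult scY_of_real mult.commute)

definition comb :: "'k \<Rightarrow> 'k \<Rightarrow> 'b" where "comb a b = scY a u + scY b v"

lemma comb_add: "comb (a + a') (b + b') = comb a b + comb a' b'"
  unfolding comb_def by (simp add: scY_add_left algebra_simps)

lemma comb_diff: "comb (a - a') (b - b') = comb a b - comb a' b'"
  unfolding comb_def using linear_diff[OF bounded_linear.linear[OF bounded_linear_scY_left]]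
  by (simp add: algebra_simps)

lemma comb_mult: "comb (c * a) (c * b) = scY c (comb a b)"
  unfolding comb_def by (simp add: scY_mult scY_add_right)

lemma norm_comb_mult: "norm (comb (c * a) (c * b)) = norm c * norm (comb a b)"
  by (simp add: comb_mult norm_scY)

lemma comb_eq_0_iff: "comb a b = 0 \<longleftrightarrow> a = 0 \<and> b = 0"
  using indep unfolding K_indep2_def comb_def by auto

lemma comb_0 [simp]: "comb 0 0 = 0"
  by (simp add: comb_eq_0_iff)

lemma comb_in_span: "comb a b \<in> K_span2 scY u v"
  unfolding K_span2_def comb_def by blast

lemma continuous_on_comb [continuous_intros]:
  "continuous_on S f \<Longrightarrow> continuous_on S g \<Longrightarrow> continuous_on S (\<lambda>x. comb (f x) (g x))"
  unfolding comb_def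
  by (intro continuous_on_add bounded_linear.continuous_on[OF bounded_linear_scY_left])

lemma tendsto_comb [tendsto_intros]:
  "(f \<longlongrightarrow> a) F \<Longrightarrow> (g \<longlongrightarrow> b) F \<Longrightarrow> ((\<lambda>x. comb (f x) (g x)) \<longlongrightarrow> comb a b) F"
  unfolding comb_def
  by (intro tendsto_add bounded_linear.tendsto[OF bounded_linear_scY_left])

lemma norm_comb_lower: "\<exists>\<kappa>>0. \<forall>a b. \<kappa> * (norm a + norm b) \<le> norm (comb a b)"
proof -
  define S :: "('k \<times> 'k) set" where "S = cball 0 1 \<times> cball 0 1 \<inter> {p. norm (fst p) + norm (snd p) = 1}"
  have "closed {p::'k \<times> 'k. norm (fst p) + norm (snd p) = 1}"
    by (intro closed_Collect_eq continuous_intros)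
  then have "compact S"
    unfolding S_def by (intro compact_Int_closed compact_Times compact_cball_real_normed_field)
  moreover have "S \<noteq> {}"
  proof -
    have "(1, 0) \<in> S" unfolding S_def by simp
    then show ?thesis by blast
  qed
  moreover have "continuous_on S (\<lambda>p. norm (comb (fst p) (snd p)))"
    by (intro continuous_intros)
  ultimately have "\<exists>p0\<in>S. \<forall>p\<in>S. norm (comb (fst p0) (snd p0)) \<le> norm (comb (fst p) (snd p))"
    by (rule continuous_attains_inf)
  then obtain p0 where "p0 \<in> S" and p0: "\<And>p. p \<in> S \<Longrightarrow> norm (comb (fst p0) (snd p0)) \<le> norm (comb (fst p) (snd p))"
    by blast
  define \<kappa> where "\<kappa> = norm (comb (fst p0) (snd p0))"
  have "0 < \<kappa>" using \<open>p0 \<in> S\<close> unfolding \<kappa>_def S_def by (auto simp: comb_eq_0_iff)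
  have "\<kappa> * (norm a + norm b) \<le> norm (comb a b)" for a b
  proof (cases "norm a + norm b = 0")
    case False
    define s where "s = norm a + norm b"
    have "0 < s" using False norm_ge_zero[of a] norm_ge_zero[of b] unfolding s_def by linarith
    define c :: 'k where "c = of_real (inverse s)"
    have nc: "norm c = inverse s" unfolding c_def using \<open>0 < s\<close> by (simp add: norm_inverse)
    have "norm (c * a) + norm (c * b) = inverse s * s"
      by (simp add: norm_mult nc s_def distrib_left)
    then have sum: "norm (c * a) + norm (c * b) = 1" using \<open>0 < s\<close> by simp
    moreover have "norm (c * a) \<le> 1" "norm (c * b) \<le> 1"
      using sum norm_ge_zero[of "c * a"] norm_ge_zero[of "c * b"] by linarith+
    ultimately have "(c * a, c * b) \<in> S" unfolding S_def by simp
    then have "\<kappa> \<le> norm c * norm (comb a b)"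
      unfolding \<kappa>_def norm_comb_mult[symmetric] using p0 by fastforce
    then have "\<kappa> * s \<le> norm (comb a b)" using \<open>0 < s\<close> by (simp add: nc field_simps)
    then show ?thesis by (simp add: s_def)
  qed simp
  with \<open>0 < \<kappa>\<close> show ?thesis by blast
qed

lemma compact_span_sphere: "compact {y \<in> K_span2 scY u v. norm y = 1}"
proof -
  obtain \<kappa> where "0 < \<kappa>" and \<kappa>: "\<And>a b. \<kappa> * (norm a + norm b) \<le> norm (comb a b)"
    using norm_comb_lower by blast
  define P :: "('k \<times> 'k) set"
    where "P = cball 0 (1/\<kappa>) \<times> cball 0 (1/\<kappa>) \<inter> {p. norm (comb (fst p) (snd p)) = 1}"
  have "closed {p::'k \<times> 'k. norm (comb (fst p) (snd p)) = 1}"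
    by (intro closed_Collect_eq continuous_intros)
  then have "compact P"
    unfolding P_def by (intro compact_Int_closed compact_Times compact_cball_real_normed_field)
  then have "compact ((\<lambda>p. comb (fst p) (snd p)) ` P)"
    by (intro compact_continuous_image continuous_intros)
  moreover have "{y \<in> K_span2 scY u v. norm y = 1} = (\<lambda>p. comb (fst p) (snd p)) ` P"
  proof (intro equalityI subsetI)
    fix y assume "y \<in> {y \<in> K_span2 scY u v. norm y = 1}"
    then obtain a b where y: "y = comb a b" "norm (comb a b) = 1"
      unfolding K_span2_def comb_def by auto
    then have "\<kappa> * norm a \<le> 1" "\<kappa> * norm b \<le> 1"
      using \<kappa>[of a b] norm_ge_zero[of a] norm_ge_zero[of b] \<open>0 < \<kappa>\<close>
      by (smt (verit) mult_left_mono)+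
    then have "(a, b) \<in> P" unfolding P_def using y \<open>0 < \<kappa>\<close> by (simp add: field_simps)
    then show "y \<in> (\<lambda>p. comb (fst p) (snd p)) ` P" using y by force
  qed (auto simp: P_def comb_in_span)
  ultimately show ?thesis by simp
qed

lemma uniformly_convex_span: "uniformly_convex (K_span2 scY u v) norm"
  by (rule compact_sphere_imp_uniformly_convex[OF strictly_convex compact_span_sphere])

lemma nearest_point_exists: "\<exists>c0. \<forall>c. norm (comb c0 1) \<le> norm (comb c 1)"
proof -
  obtain \<kappa> where "0 < \<kappa>" and \<kappa>: "\<And>a b. \<kappa> * (norm a + norm b) \<le> norm (comb a b)"
    using norm_comb_lower by blast
  define R where "R = norm (comb 0 1) / \<kappa>"
  have "0 \<le> R" unfolding R_def using \<open>0 < \<kappa>\<close> by simp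
  then have "\<exists>c0\<in>cball 0 R. \<forall>c\<in>cball 0 R. norm (comb c0 1) \<le> norm (comb c 1)"
    by (intro continuous_attains_inf compact_cball_real_normed_field continuous_intros) auto
  then obtain c0 where "c0 \<in> cball 0 R" and c0: "\<And>c. c \<in> cball 0 R \<Longrightarrow> norm (comb c0 1) \<le> norm (comb c 1)"
    by blast
  have "norm (comb c0 1) \<le> norm (comb c 1)" for c
  proof (cases "c \<in> cball 0 R")
    case False
    then have "norm (comb 0 1) < \<kappa> * norm c"
      using \<open>0 < \<kappa>\<close> unfolding R_def by (simp add: field_simps)
    also have "\<dots> \<le> norm (comb c 1)" using \<kappa>[of c 1] \<open>0 < \<kappa>\<close> by (simp add: algebra_simps)
    finally show ?thesis using c0[of 0] \<open>0 \<le> R\<close> by simp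
  qed (rule c0)
  then show ?thesis by blast
qed

lemma norm_comb_proj_le:
  assumes c0: "\<And>c. norm (comb c0 1) \<le> norm (comb c 1)"
  shows "norm (comb (b * c0) b) \<le> norm (comb a b)"
proof (cases "b = 0")
  case True
  then show ?thesis by simp
next
  case False
  then have "norm (comb (b * c0) (b * 1)) \<le> norm (comb (b * (a / b)) (b * 1))"
    unfolding norm_comb_mult using c0 by (simp add: mult_left_mono)
  with False show ?thesis by simp
qed

definition plane_norm :: "(nat \<Rightarrow> 'k) \<Rightarrow> real" where
  "plane_norm x = norm (comb (x 0) (x 1))"

lemma K_normed_space_plane: "K_normed_space two_coord_space (\<lambda>c x i. c * x i) plane_norm"
  unfolding K_normed_space_def
proof (intro conjI ballI allI)
  show "(plane_norm x = 0) = (x = 0)" if "x \<in> two_coord_space" for x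
    using two_coord_space_eqI[OF that, of 0]
    by (auto simp: plane_norm_def comb_eq_0_iff two_coord_space_def)
  show "plane_norm (\<lambda>i. c * x i) = norm c * plane_norm x" for c x
    unfolding plane_norm_def by (rule norm_comb_mult)
  show "plane_norm (x + y) \<le> plane_norm x + plane_norm y" for x y
    unfolding plane_norm_def by (simp add: comb_add norm_triangle_ineq)
qed (auto simp: two_coord_space_def fun_eq_iff algebra_simps)

lemma K_banach_space_plane: "K_banach_space two_coord_space (\<lambda>c x i. c * x i) plane_norm"
  unfolding K_banach_space_def
proof (intro conjI K_normed_space_plane allI impI)
  fix f :: "nat \<Rightarrow> nat \<Rightarrow> 'k"
  assume "(\<forall>n. f n \<in> two_coord_space) \<and> (\<forall>e>0. \<exists>M. \<forall>m\<ge>M. \<forall>n\<ge>M. plane_norm (f m - f n) < e)"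
  then have space: "\<And>n. f n \<in> two_coord_space"
    and Cauchy_f: "\<And>e. 0 < e \<Longrightarrow> \<exists>M. \<forall>m\<ge>M. \<forall>n\<ge>M. plane_norm (f m - f n) < e"
    by blast+
  obtain \<kappa> where "0 < \<kappa>" and \<kappa>: "\<And>a b. \<kappa> * (norm a + norm b) \<le> norm (comb a b)"
    using norm_comb_lower by blast
  have "Cauchy (\<lambda>n. f n j)" if "j < 2" for j
    unfolding Cauchy_iff
  proof (intro allI impI)
    fix e :: real assume "0 < e"
    then obtain M where M: "\<And>m n. M \<le> m \<Longrightarrow> M \<le> n \<Longrightarrow> plane_norm (f m - f n) < \<kappa> * e"
      using Cauchy_f[of "\<kappa> * e"] \<open>0 < \<kappa>\<close> by auto
    have "norm (f m j - f n j) < e" if "M \<le> m" "M \<le> n" for m n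
    proof -
      have "plane_norm (f m - f n) = norm (comb (f m 0 - f n 0) (f m 1 - f n 1))"
        by (simp add: plane_norm_def)
      then have "\<kappa> * (norm (f m 0 - f n 0) + norm (f m 1 - f n 1)) < \<kappa> * e"
        using \<kappa>[of "f m 0 - f n 0" "f m 1 - f n 1"] M[OF that] by linarith
      then have "norm (f m 0 - f n 0) + norm (f m 1 - f n 1) < e"
        using \<open>0 < \<kappa>\<close> by simp
      then have "norm (f m 0 - f n 0) < e" "norm (f m 1 - f n 1) < e"
        using norm_ge_zero[of "f m 0 - f n 0"] norm_ge_zero[of "f m 1 - f n 1"] by linarith+
      then show ?thesis using \<open>j < 2\<close> by (auto simp: less_2_cases_iff)
    qed
    then show "\<exists>M. \<forall>m\<ge>M. \<forall>n\<ge>M. norm (f m j - f n j) < e" by blast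
  qed
  then have "convergent (\<lambda>n. f n 0)" "convergent (\<lambda>n. f n 1)"
    by (simp_all add: Cauchy_convergent_iff)
  then obtain l0 l1 where l0: "(\<lambda>n. f n 0) \<longlonglongrightarrow> l0" and l1: "(\<lambda>n. f n 1) \<longlonglongrightarrow> l1"
    unfolding convergent_def by blast
  define x where "x i = (if i = 0 then l0 else if i = 1 then l1 else 0)" for i :: nat
  have "(\<lambda>n. norm (comb (f n 0 - l0) (f n 1 - l1))) \<longlonglongrightarrow> norm (comb (l0 - l0) (l1 - l1))"
    by (intro tendsto_intros l0 l1)
  moreover have "plane_norm (f n - x) = norm (comb (f n 0 - l0) (f n 1 - l1))" for n
    by (simp add: plane_norm_def x_def)
  ultimately have "(\<lambda>n. plane_norm (f n - x)) \<longlonglongrightarrow> 0" by simp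
  then have "\<forall>e>0. \<exists>M. \<forall>n\<ge>M. plane_norm (f n - x) < e"
    by (auto simp: LIMSEQ_iff plane_norm_def)
  moreover have "x \<in> two_coord_space" unfolding two_coord_space_def x_def by simp
  ultimately show "\<exists>x\<in>two_coord_space. \<forall>e>0. \<exists>M. \<forall>n\<ge>M. plane_norm (f n - x) < e"
    by blast
qed

lemma uniformly_convex_plane: "uniformly_convex two_coord_space plane_norm"
  unfolding uniformly_convex_def
proof (intro allI impI)
  fix \<epsilon> :: real assume "0 < \<epsilon>"
  then obtain \<delta> where "0 < \<delta>" and \<delta>: "\<forall>y\<in>K_span2 scY u v. \<forall>z\<in>K_span2 scY u v.
      norm y = 1 \<and> norm z = 1 \<and> \<epsilon> \<le> norm (y - z) \<longrightarrow> norm (y + z) / 2 \<le> 1 - \<delta>"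
    using uniformly_convex_span unfolding uniformly_convex_def by blast
  have "plane_norm (x + y) / 2 \<le> 1 - \<delta>"
    if "plane_norm x = 1" "plane_norm y = 1" "\<epsilon> \<le> plane_norm (x - y)" for x y :: "nat \<Rightarrow> 'k"
    using \<delta>[rule_format, OF comb_in_span comb_in_span, of "x 0" "x 1" "y 0" "y 1"] that
    unfolding plane_norm_def by (simp add: comb_add comb_diff)
  with \<open>0 < \<delta>\<close> show "\<exists>\<delta>>0. \<forall>x\<in>two_coord_space. \<forall>y\<in>two_coord_space.
      plane_norm x = 1 \<and> plane_norm y = 1 \<and> \<epsilon> \<le> plane_norm (x - y) \<longrightarrow> plane_norm (x + y) / 2 \<le> 1 - \<delta>"
    by blast
qed

text \<open>\<open>tilted_op c\<^sub>0 t\<close> is the operator \<open>(1 - t) J + t J P\<close> with \<open>J x = comb (x 0) (x 1)\<close> and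
  \<open>P x = x 1 (c\<^sub>0, 1)\<close>, the projection along the first coordinate.\<close>

definition tilted_op :: "'k \<Rightarrow> real \<Rightarrow> (nat \<Rightarrow> 'k) \<Rightarrow> 'b" where
  "tilted_op c0 t x = (1 - t) *\<^sub>R comb (x 0) (x 1) + t *\<^sub>R comb (x 1 * c0) (x 1)"

lemma K_linear_on_tilted_op: "K_linear_on two_coord_space (\<lambda>c x i. c * x i) scY (tilted_op c0 t)"
  unfolding K_linear_on_def
proof (intro conjI ballI allI)
  show "tilted_op c0 t (x + y) = tilted_op c0 t x + tilted_op c0 t y" for x y :: "nat \<Rightarrow> 'k"
    unfolding tilted_op_def by (simp add: comb_add algebra_simps)
  show "tilted_op c0 t (\<lambda>i. c * x i) = scY c (tilted_op c0 t x)" for c and x :: "nat \<Rightarrow> 'k"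
    unfolding tilted_op_def using comb_mult[of c "x 1 * c0" "x 1"]
    by (simp add: comb_mult scY_add_right scY_scaleR mult.assoc)
qed

lemma norm_tilted_op_le:
  assumes c0: "\<And>c. norm (comb c0 1) \<le> norm (comb c 1)" and t: "0 \<le> t" "t \<le> 1"
  shows "norm (tilted_op c0 t x) \<le> plane_norm x"
proof -
  have "norm (tilted_op c0 t x) \<le> (1 - t) * norm (comb (x 0) (x 1)) + t * norm (comb (x 1 * c0) (x 1))"
    unfolding tilted_op_def using norm_triangle_ineq t by (simp add: order_trans[OF norm_triangle_ineq])
  also have "\<dots> \<le> (1 - t) * norm (comb (x 0) (x 1)) + t * norm (comb (x 0) (x 1))"
    using norm_comb_proj_le[OF c0] t by (intro add_left_mono mult_left_mono) auto
  finally show ?thesis by (simp add: plane_norm_def algebra_simps)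
qed

lemma op_norm_tilted_op:
  assumes c0: "\<And>c. norm (comb c0 1) \<le> norm (comb c 1)" and t: "0 \<le> t" "t \<le> 1"
  shows "op_norm_on two_coord_space plane_norm (tilted_op c0 t) = 1"
  unfolding op_norm_on_def
proof (rule cSup_eq_maximum)
  define s :: 'k where "s = of_real (inverse (norm (comb c0 1)))"
  define w where "w i = (if i = 0 then s * c0 else if i = 1 then s * 1 else 0)" for i :: nat
  have "comb c0 1 \<noteq> 0" by (simp add: comb_eq_0_iff)
  moreover have w: "w 0 = s * c0" "w 1 = s * 1" by (simp_all add: w_def)
  ultimately have "plane_norm w = 1"
    unfolding plane_norm_def w norm_comb_mult s_def by (simp add: norm_inverse)
  moreover have "tilted_op c0 t w = comb (w 0) (w 1)"
    unfolding tilted_op_def w_def by (simp flip: scaleR_add_left)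
  moreover have "w \<in> two_coord_space" unfolding two_coord_space_def w_def by simp
  ultimately show "1 \<in> (\<lambda>x. norm (tilted_op c0 t x)) ` {x \<in> two_coord_space. plane_norm x \<le> 1}"
    unfolding plane_norm_def by (auto intro!: image_eqI[of _ _ w])
  show "z \<le> 1" if "z \<in> (\<lambda>x. norm (tilted_op c0 t x)) ` {x \<in> two_coord_space. plane_norm x \<le> 1}" for z
    using that norm_tilted_op_le[OF c0 t] by (auto intro: order_trans)
qed

lemma tilted_op_norm_attained:
  assumes c0: "\<And>c. norm (comb c0 1) \<le> norm (comb c 1)" and t: "0 < t" "t \<le> 1/2"
    and x: "plane_norm x = 1" "norm (tilted_op c0 t x) = 1"
  shows "x 0 = x 1 * c0"
proof -
  have "comb (x 0) (x 1) = comb (x 1 * c0) (x 1)"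
  proof (rule strictly_convex_set_norm_comb_eq[OF strictly_convex comb_in_span comb_in_span _ _ t])
    show "norm (comb (x 0) (x 1)) = 1" using x(1) unfolding plane_norm_def .
    show "norm (comb (x 1 * c0) (x 1)) \<le> 1"
      using norm_comb_proj_le[OF c0] x(1) unfolding plane_norm_def by metis
    show "norm ((1 - t) *\<^sub>R comb (x 0) (x 1) + t *\<^sub>R comb (x 1 * c0) (x 1)) = 1"
      using x(2) unfolding tilted_op_def .
  qed
  then have "comb (x 0 - x 1 * c0) (x 1 - x 1) = 0"
    using comb_diff[of "x 0" "x 1 * c0" "x 1" "x 1"] by simp
  then show ?thesis by (simp add: comb_eq_0_iff)
qed

lemma not_uniform_sBPBp_plane: "\<not> uniform_sBPBp two_coord_space (\<lambda>c x i. c * x i) plane_norm scY"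
proof
  assume sBPBp: "uniform_sBPBp two_coord_space (\<lambda>c x i. c * x i) plane_norm scY"
  obtain \<eta> where "0 < \<eta>" and sBPB: "\<And>T :: (nat \<Rightarrow> 'k) \<Rightarrow> 'b.
      K_linear_on two_coord_space (\<lambda>c x i. c * x i) scY T \<and> bounded_on two_coord_space plane_norm T
        \<and> op_norm_on two_coord_space plane_norm T = 1 \<Longrightarrow>
      \<forall>x0\<in>two_coord_space. plane_norm x0 = 1 \<and> 1 - \<eta> < norm (T x0) \<longrightarrow>
        (\<exists>x1\<in>two_coord_space. plane_norm x1 = 1 \<and> norm (T x1) = 1 \<and> plane_norm (x1 - x0) < 1)"
    using sBPBp[unfolded uniform_sBPBp_def, rule_format, OF zero_less_one] by blast
  obtain c0 where c0: "\<And>c. norm (comb c0 1) \<le> norm (comb c 1)"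
    using nearest_point_exists by blast
  define t where "t = min (\<eta>/2) (1/2)"
  have t: "0 < t" "t \<le> 1/2" "t < \<eta>" using \<open>0 < \<eta>\<close> unfolding t_def by auto
  define x0 where "x0 i = (if i = 0 then of_real (inverse (norm u)) else 0 :: 'k)" for i :: nat
  have "u \<noteq> 0" using comb_eq_0_iff[of 1 0] by (simp add: comb_def)
  then have "plane_norm x0 = 1" and "norm (tilted_op c0 t x0) = 1 - t"
    using t by (simp_all add: plane_norm_def tilted_op_def x0_def comb_def norm_scY norm_inverse)
  moreover have "x0 \<in> two_coord_space" unfolding two_coord_space_def x0_def by simp
  moreover have "bounded_on two_coord_space plane_norm (tilted_op c0 t)"
    unfolding bounded_on_def using norm_tilted_op_le[OF c0] t by (intro exI[of _ 1]) simp
  then have "\<forall>x0\<in>two_coord_space. plane_norm x0 = 1 \<and> 1 - \<eta> < norm (tilted_op c0 t x0) \<longrightarrow>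
      (\<exists>x1\<in>two_coord_space. plane_norm x1 = 1 \<and> norm (tilted_op c0 t x1) = 1 \<and> plane_norm (x1 - x0) < 1)"
    using K_linear_on_tilted_op op_norm_tilted_op[OF c0] t by (intro sBPB) simp
  ultimately obtain x1 where "plane_norm x1 = 1" "norm (tilted_op c0 t x1) = 1"
    and "plane_norm (x1 - x0) < 1"
    using t by fastforce
  moreover have "x1 0 = x1 1 * c0" using tilted_op_norm_attained[OF c0 t(1,2)] calculation by blast
  ultimately have "plane_norm (x1 - x0) < norm (comb (x1 1 * c0) (x1 1))"
    unfolding plane_norm_def by simp
  moreover have "norm (comb (x1 1 * c0) (x1 1)) \<le> plane_norm (x1 - x0)"
    unfolding plane_norm_def x0_def using norm_comb_proj_le[OF c0] by simp
  ultimately show False by simp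
qed

end

theorem mainTheorem15:
  fixes scY :: "'k::{real_normed_field,banach} \<Rightarrow> 'b::banach \<Rightarrow> 'b"
  assumes "K_scalar_action scY"
    and "\<exists>u v. K_indep2 scY u v \<and> strictly_convex_set (K_span2 scY u v)"
  shows "\<exists>(V :: (nat \<Rightarrow> 'k) set) (N :: (nat \<Rightarrow> 'k) \<Rightarrow> real).
           K_banach_space V (\<lambda>c x i. c * x i) N \<and> uniformly_convex V N \<and>
           \<not> uniform_sBPBp V (\<lambda>c x i. c * x i) N scY"
proof -
  obtain u v where "K_indep2 scY u v" "strictly_convex_set (K_span2 scY u v)"
    using assms(2) by blast
  then interpret strictly_convex_plane scY u v
    using assms(1) by unfold_locales
  show ?thesis
    using K_banach_space_plane uniformly_convex_plane not_uniform_sBPBp_plane by blast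
qed

end
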